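(* Let $r\ge1$, $t,s\ge0$ be integers and $\mathbf{u}=(u_1,\dots,u_r)\in\mathbb{Z}_+^r$. Let $\mathbf{u}+s=(u_1+s,\dots,u_r+s)$. Then $|\mathcal{A}_{t,s}(\mathbf{u})|\le|\mathcal{A}_{t,s}(\mathbf{u}+s)|$.
   Context: For $\mathbf{u}\in\mathbb{Z}_+^r$ (positive integers), $\mathcal{A}_{t,s}(\mathbf{u})=\{\mathbf{v}\in\mathbb{Z}_+^r:\ \sum_{i=1}^r\max\{0,u_i-v_i\}\le s,\ \sum_{i=1}^r\max\{0,v_i-u_i\}\le t\}$. *)

theory Defs
  imports Main
begin

text \<open>Vectors in Z_+^r are represented as lists of naturals of length r with all
entries positive. Truncated natural subtraction a - b equals max 0 (a - b).\<close>

definition pos_vec :: "nat \<Rightarrow> nat list \<Rightarrow> bool" where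
  "pos_vec r v \<longleftrightarrow> length v = r \<and> (\<forall>x\<in>set v. 0 < x)"

definition A_set :: "nat \<Rightarrow> nat \<Rightarrow> nat list \<Rightarrow> nat list set" where
  "A_set t s u = {v. pos_vec (length u) v
      \<and> (\<Sum>i<length u. u ! i - v ! i) \<le> s
      \<and> (\<Sum>i<length u. v ! i - u ! i) \<le> t}"

end

theory Submission
  imports Defs
begin

text \<open>Adding the same constant \<open>c\<close> to every coordinate of \<open>u\<close> and \<open>v\<close> leaves each
difference \<open>u ! i - v ! i\<close> and \<open>v ! i - u ! i\<close> unchanged, so translation by \<open>c\<close> maps
\<open>A_set t s u\<close> injectively into \<open>A_set t s (map (\<lambda>x. x + c) u)\<close>; the theorem is the case
\<open>c = s\<close>. The target is finite because its members exceed the centre by at most \<open>t\<close> in each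
coordinate.\<close>

lemma length_of_A_set: "v \<in> A_set t s u \<Longrightarrow> length v = length u"
  by (simp add: A_set_def pos_vec_def)

lemma nth_le_of_A_set:
  assumes "v \<in> A_set t s u" and "i < length u"
  shows "v ! i \<le> u ! i + t"
proof -
  have "v ! i - u ! i \<le> (\<Sum>j<length u. v ! j - u ! j)"
    using assms(2) by (intro member_le_sum) auto
  also have "\<dots> \<le> t"
    using assms(1) by (simp add: A_set_def)
  finally show ?thesis by linarith
qed

lemma finite_A_set: "finite (A_set t s u)"
proof (rule finite_subset)
  let ?bound = "sum_list u + t"
  show "A_set t s u \<subseteq> {v. set v \<subseteq> {0..?bound} \<and> length v = length u}"
  proof (safe intro!: length_of_A_set)
    fix v x assume v: "v \<in> A_set t s u" and "x \<in> set v"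
    then obtain i where i: "i < length u" "x = v ! i"
      by (auto simp: in_set_conv_nth length_of_A_set)
    have "u ! i \<le> sum_list u"
      using i(1) by (simp add: member_le_sum_list)
    with nth_le_of_A_set[OF v i(1)] i(2) show "x \<in> {0..?bound}" by simp
  qed
  show "finite {v. set v \<subseteq> {0..?bound} \<and> length v = length u}"
    by (rule finite_lists_length_eq) simp
qed

lemma map_add_mem_A_set:
  assumes "v \<in> A_set t s u"
  shows "map (\<lambda>x. x + c) v \<in> A_set t s (map (\<lambda>x. x + c) u)"
proof -
  have len: "length v = length u"
    using assms by (rule length_of_A_set)
  have "(\<Sum>i<length u. map (\<lambda>x. x + c) u ! i - map (\<lambda>x. x + c) v ! i)
      = (\<Sum>i<length u. u ! i - v ! i)"
    and "(\<Sum>i<length u. map (\<lambda>x. x + c) v ! i - map (\<lambda>x. x + c) u ! i)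
      = (\<Sum>i<length u. v ! i - u ! i)"
    by (auto intro!: sum.cong simp: len)
  with assms len show ?thesis
    by (auto simp: A_set_def pos_vec_def)
qed

lemma card_A_set_le_card_A_set_map_add:
  "card (A_set t s u) \<le> card (A_set t s (map (\<lambda>x. x + c) u))"
proof (rule card_inj_on_le)
  show "inj_on (map (\<lambda>x. x + c)) (A_set t s u)"
    by (auto intro!: inj_onI dest: map_inj_on)
  show "map (\<lambda>x. x + c) ` A_set t s u \<subseteq> A_set t s (map (\<lambda>x. x + c) u)"
    by (auto intro: map_add_mem_A_set)
qed (rule finite_A_set)

theorem lemma1:
  fixes r t s :: nat and u :: "nat list"
  assumes "r \<ge> 1" and "pos_vec r u"
  shows "card (A_set t s u) \<le> card (A_set t s (map (\<lambda>x. x + s) u))"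
  by (rule card_A_set_le_card_A_set_map_add)

end
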